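(* Let $n\ge 3$ be an integer. If $G$ is a graph on $2n$ vertices with at least $n^2-1$ edges such that $G$ does not contain two distinct vertices of the same degree joined by a path of length three, then $G$ is isomorphic to the complete bipartite graph $K_{n-1,n+1}$. (Equivalently, $K_{n-1,n+1}$ is the unique such graph.)
   Context: A path of length three joining vertices $a$ and $b$ is a path $a\,x\,y\,b$ with four distinct vertices and three edges $ax,xy,yb$. Graphs are finite and simple. *)

theory Defs
  imports Main
begin

definition simple_graph :: "'a set \<Rightarrow> 'a set set \<Rightarrow> bool" where
  "simple_graph V E \<longleftrightarrow> finite V \<and> (\<forall>e\<in>E. e \<subseteq> V \<and> card e = 2)"

definition degree :: "'a set set \<Rightarrow> 'a \<Rightarrow> nat" where
  "degree E v = card {e\<in>E. v \<in> e}"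

definition path3 :: "'a set set \<Rightarrow> 'a \<Rightarrow> 'a \<Rightarrow> bool" where
  "path3 E a b \<longleftrightarrow> (\<exists>x y. distinct [a, x, y, b] \<and>
      {a, x} \<in> E \<and> {x, y} \<in> E \<and> {y, b} \<in> E)"

definition Kbip_verts :: "nat \<Rightarrow> nat \<Rightarrow> nat set" where
  "Kbip_verts p q = {0..<p+q}"

definition Kbip_edges :: "nat \<Rightarrow> nat \<Rightarrow> nat set set" where
  "Kbip_edges p q = {{i, j} | i j. i < p \<and> p \<le> j \<and> j < p + q}"

definition graph_iso :: "'a set \<Rightarrow> 'a set set \<Rightarrow> 'b set \<Rightarrow> 'b set set \<Rightarrow> bool" where
  "graph_iso V E V' E' \<longleftrightarrow> (\<exists>f. bij_betw f V V' \<and>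
      (\<forall>u\<in>V. \<forall>v\<in>V. {u, v} \<in> E \<longleftrightarrow> {f u, f v} \<in> E'))"

end

theory Submission
  imports Defs
begin

(*
  Let x have maximum degree D, let A be its neighbourhood and B the set of remaining vertices other
  than x. Since the degree sum is at least 2n^2 - 2, D >= n. Two facts about equal degrees drive the
  argument: adjacent vertices of equal degree d satisfy 2d <= |V| + 1 (their common neighbours have
  pairwise distinct degrees), and two vertices of A of equal degree d with D + d > |V| are adjacent
  (otherwise they and x have too many neighbours in total).

  If A is independent, double counting gives D (2n - D) >= n^2 - 1, so D is n or n + 1. D = n fails:
  some a in A has degree n and hence sees all of V - A, and a second vertex a' of A with a neighbour
  b other than x gives the path a b a' x between two vertices of degree n. D = n + 1 forces every
  vertex of A to see exactly V - A, which is K_{n-1,n+1}.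

  If A contains an edge, every estimate of the degree sum falls below 2n^2 - 2: a vertex of B of
  degree D has no neighbour with a neighbour in A; D = n leaves only n = 3; and for D > n the degrees
  in A above |B| + 2 are pairwise distinct, the value |B| + 2 occurs at most twice, and a vertex of
  maximum degree in B rules out one more value.
*)

lemma card_insert_le_Suc: "card (insert x S) \<le> Suc (card S)"
  by (cases "finite S") (simp_all add: card_insert_if)

lemma sum_le_single_plus_bound:
  fixes f :: "'a \<Rightarrow> nat"
  assumes "finite S" "a \<in> S" "\<And>v. v \<in> S - {a} \<Longrightarrow> f v \<le> K"
  shows "sum f S \<le> f a + (card S - 1) * K"
proof -
  have "sum f S = f a + sum f (S - {a})"
    using assms(1,2) by (rule sum.remove)
  moreover have "sum f (S - {a}) \<le> card (S - {a}) * K"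
    using sum_bounded_above[of "S - {a}" f K] assms(3) by simp
  ultimately show ?thesis
    using assms(1,2) by simp
qed

lemma mem_Kbip_edges_iff:
  "{i, j} \<in> Kbip_edges p q \<longleftrightarrow>
    (i < p \<and> p \<le> j \<and> j < p + q) \<or> (j < p \<and> p \<le> i \<and> i < p + q)"
  unfolding Kbip_edges_def by (auto simp: doubleton_eq_iff)

lemma graph_iso_Kbip:
  assumes "finite V" "X \<subseteq> V" "card X = p" "card (V - X) = q"
    and edges: "\<And>u v. u \<in> V \<Longrightarrow> v \<in> V \<Longrightarrow> {u, v} \<in> E \<longleftrightarrow> (u \<in> X \<longleftrightarrow> v \<notin> X)"
  shows "graph_iso V E (Kbip_verts p q) (Kbip_edges p q)"
proof -
  obtain g where g: "bij_betw g X {0..<p}"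
    using assms(1-3) finite_same_card_bij[of X "{0..<p}"] finite_subset by auto
  obtain h where h: "bij_betw h (V - X) {p..<p + q}"
    using assms(1,4) finite_same_card_bij[of "V - X" "{p..<p + q}"] by auto
  define f where "f u = (if u \<in> X then g u else h u)" for u
  have "bij_betw f X {0..<p}"
    using g by (rule bij_betw_cong[THEN iffD1, rotated]) (simp add: f_def)
  moreover have "bij_betw f (V - X) {p..<p + q}"
    using h by (rule bij_betw_cong[THEN iffD1, rotated]) (simp add: f_def)
  ultimately have "bij_betw f (X \<union> (V - X)) ({0..<p} \<union> {p..<p + q})"
    by (rule bij_betw_combine) auto
  moreover have "X \<union> (V - X) = V" "{0..<p} \<union> {p..<p + q} = {0..<p + q}"
    using assms(2) by auto
  ultimately have bij: "bij_betw f V (Kbip_verts p q)"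
    unfolding Kbip_verts_def by simp
  have fX: "f u < p" if "u \<in> X" for u
    using that bij_betw_apply[OF \<open>bij_betw f X {0..<p}\<close>] by simp
  have fY: "p \<le> f u \<and> f u < p + q" if "u \<in> V - X" for u
    using that bij_betw_apply[OF \<open>bij_betw f (V - X) {p..<p + q}\<close>] by simp
  have "{u, v} \<in> E \<longleftrightarrow> {f u, f v} \<in> Kbip_edges p q" if "u \<in> V" "v \<in> V" for u v
    using edges[OF that] fX[of u] fX[of v] fY[of u] fY[of v] that unfolding mem_Kbip_edges_iff
    by (cases "u \<in> X"; cases "v \<in> X") auto
  then show ?thesis
    unfolding graph_iso_def using bij by blast
qed

lemma sum_inj_on_le_sum:
  fixes f :: "'a \<Rightarrow> nat"
  assumes "inj_on f H" "f ` H \<subseteq> T" "finite T"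
  shows "sum f H \<le> \<Sum>T"
proof -
  have "sum f H = \<Sum>(f ` H)"
    using sum.reindex[OF assms(1), of id] by simp
  also have "\<dots> \<le> \<Sum>T"
    using assms(2,3) by (intro sum_mono2) auto
  finally show ?thesis .
qed

lemma double_sum_from_2:
  fixes s :: nat
  assumes "1 \<le> s"
  shows "2 * (\<Sum>i = 2..s. i) + 2 = s * (s + 1)"
proof -
  have "{1..s} = insert 1 {2..s}"
    using assms by auto
  then have "(\<Sum>i = 1..s. i) = 1 + (\<Sum>i = 2..s. i)"
    by simp
  moreover have "2 * (\<Sum>i = 1..s. i) = s * (s + 1)"
    using double_gauss_sum_from_Suc_0[of s, where ?'a = nat] by simp
  ultimately show ?thesis
    by simp
qed

locale finite_simple_graph =
  fixes V :: "'a set" and E :: "'a set set"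
  assumes simple_graph: "simple_graph V E"
begin

abbreviation deg :: "'a \<Rightarrow> nat" where "deg \<equiv> degree E"

definition nbrs :: "'a \<Rightarrow> 'a set" where
  "nbrs v = {u\<in>V. {u, v} \<in> E}"

lemma finite_vertices: "finite V"
  using simple_graph unfolding simple_graph_def by blast

lemma edge_subset: "e \<in> E \<Longrightarrow> e \<subseteq> V"
  using simple_graph unfolding simple_graph_def by blast

lemma card_edge: "e \<in> E \<Longrightarrow> card e = 2"
  using simple_graph unfolding simple_graph_def by blast

lemma finite_edges: "finite E"
proof (rule finite_subset)
  show "E \<subseteq> Pow V"
    using edge_subset by blast
qed (simp add: finite_vertices)

lemma edge_vertices:
  assumes "{u, v} \<in> E"
  shows "u \<in> V" "v \<in> V" "u \<noteq> v"
proof -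
  show "u \<in> V" "v \<in> V"
    using edge_subset[OF assms] by auto
  show "u \<noteq> v"
    using card_edge[OF assms] by (cases "u = v") auto
qed

lemma edge_commute: "{u, v} \<in> E \<longleftrightarrow> {v, u} \<in> E"
  by (simp add: insert_commute)

lemma in_nbrs_iff: "u \<in> nbrs v \<longleftrightarrow> {u, v} \<in> E"
  unfolding nbrs_def using edge_vertices(1) by blast

lemma nbrs_sym: "u \<in> nbrs v \<longleftrightarrow> v \<in> nbrs u"
  using in_nbrs_iff edge_commute by blast

lemma nbrs_edge: "u \<in> nbrs v \<Longrightarrow> {u, v} \<in> E \<and> {v, u} \<in> E"
  using in_nbrs_iff edge_commute by blast

lemma nbrs_subset: "nbrs v \<subseteq> V"
  unfolding nbrs_def by blast

lemma finite_nbrs: "finite (nbrs v)"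
  using nbrs_subset finite_vertices by (rule finite_subset)

lemma not_in_nbrs_self: "v \<notin> nbrs v"
  using in_nbrs_iff edge_vertices(3) by blast

lemma degree_eq_card_nbrs: "deg v = card (nbrs v)"
proof -
  have "bij_betw (\<lambda>u. {u, v}) (nbrs v) {e\<in>E. v \<in> e}"
  proof (rule bij_betwI')
    fix u w assume "u \<in> nbrs v" "w \<in> nbrs v"
    then show "({u, v} = {w, v}) = (u = w)"
      using not_in_nbrs_self by (auto simp: doubleton_eq_iff)
  next
    fix u assume "u \<in> nbrs v"
    then show "{u, v} \<in> {e\<in>E. v \<in> e}"
      using in_nbrs_iff by blast
  next
    fix e assume e: "e \<in> {e\<in>E. v \<in> e}"
    then have "card e = 2"
      using card_edge by blast
    then obtain a b where ab: "e = {a, b}"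
      by (meson card_2_iff)
    obtain u where "e = {u, v}"
    proof (cases "v = a")
      case True
      with ab show ?thesis using that[of b] by (simp add: insert_commute)
    next
      case False
      with ab e show ?thesis using that[of a] by simp
    qed
    then show "\<exists>u\<in>nbrs v. e = {u, v}"
      using e in_nbrs_iff by blast
  qed
  then show ?thesis
    unfolding degree_def by (simp only: bij_betw_same_card)
qed

lemma degree_le_card: "finite S \<Longrightarrow> nbrs v \<subseteq> S \<Longrightarrow> deg v \<le> card S"
  unfolding degree_eq_card_nbrs by (rule card_mono)

lemma card_le_degree: "S \<subseteq> nbrs v \<Longrightarrow> card S \<le> deg v"
  unfolding degree_eq_card_nbrs using finite_nbrs by (rule card_mono)

lemma sum_degree: "(\<Sum>v\<in>V. deg v) = 2 * card E"
proof -
  have "(\<Sum>v\<in>V. deg v) = (\<Sum>v\<in>V. \<Sum>e\<in>E. if v \<in> e then 1 else 0)"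
    unfolding degree_def by (simp add: sum.If_cases finite_edges Int_def)
  also have "\<dots> = (\<Sum>e\<in>E. \<Sum>v\<in>V. if v \<in> e then 1 else 0)"
    by (rule sum.swap)
  also have "\<dots> = (\<Sum>e\<in>E. card e)"
  proof (rule sum.cong)
    fix e assume "e \<in> E"
    then have "V \<inter> e = e"
      using edge_subset by blast
    then show "(\<Sum>v\<in>V. if v \<in> e then 1 else 0) = card e"
      by (simp add: sum.If_cases finite_vertices)
  qed simp
  also have "\<dots> = 2 * card E"
    using card_edge by simp
  finally show ?thesis .
qed

lemma path3I:
  assumes "{a, p} \<in> E" "{p, q} \<in> E" "{q, b} \<in> E" "a \<noteq> q" "p \<noteq> b" "a \<noteq> b"
  shows "path3 E a b"
proof -
  have "a \<noteq> p" "p \<noteq> q" "q \<noteq> b"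
    using assms(1-3) edge_vertices(3) by blast+
  then show ?thesis
    unfolding path3_def using assms by (intro exI[of _ p] exI[of _ q]) auto
qed

lemma obtain_max_degree:
  assumes "finite S" "S \<noteq> {}"
  obtains q where "q \<in> S" "\<And>v. v \<in> S \<Longrightarrow> deg v \<le> deg q"
proof -
  have "Max (deg ` S) \<in> deg ` S"
    using assms by simp
  then obtain q where "q \<in> S" "deg q = Max (deg ` S)"
    by auto
  moreover have "deg v \<le> Max (deg ` S)" if "v \<in> S" for v
    using that assms(1) by simp
  ultimately show ?thesis
    using that by metis
qed

end

locale equal_degree_path3_free = finite_simple_graph +
  assumes path3_free: "\<forall>a\<in>V. \<forall>b\<in>V. a \<noteq> b \<and> degree E a = degree E b \<longrightarrow> \<not> path3 E a b"
begin

lemma path3_degree_ne: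
  assumes "path3 E a b"
  shows "deg a \<noteq> deg b"
proof -
  obtain p q where "distinct [a, p, q, b]" "{a, p} \<in> E" "{q, b} \<in> E"
    using assms unfolding path3_def by blast
  then have "a \<in> V" "b \<in> V" "a \<noteq> b"
    using edge_vertices by auto
  then show ?thesis
    using path3_free assms by blast
qed

lemma common_nbrs_subset:
  assumes "u \<noteq> v" "deg u = deg v" "p \<in> nbrs u" "p \<noteq> v"
  shows "nbrs p \<inter> nbrs v \<subseteq> {u}"
proof
  fix w assume w: "w \<in> nbrs p \<inter> nbrs v"
  show "w \<in> {u}"
  proof (rule ccontr)
    assume "w \<notin> {u}"
    then have "path3 E u v"
      using assms w by (intro path3I[of u p w v]) (auto simp: in_nbrs_iff edge_commute)
    then show False
      using assms(2) path3_degree_ne by blast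
  qed
qed

lemma degree_add_degree_le:
  assumes "u \<noteq> v" "deg u = deg v" "p \<in> nbrs u" "p \<noteq> v"
  shows "deg p + deg v \<le> card V + (if u \<in> nbrs v then 1 else 0)"
proof -
  have "card (nbrs p \<union> nbrs v) \<le> card V"
    using nbrs_subset by (intro card_mono finite_vertices) auto
  moreover have "nbrs p \<inter> nbrs v \<subseteq> (if u \<in> nbrs v then {u} else {})"
    using common_nbrs_subset[OF assms] by auto
  then have "card (nbrs p \<inter> nbrs v) \<le> (if u \<in> nbrs v then 1 else 0)"
    using card_mono[of "if u \<in> nbrs v then {u} else {}"] by (auto split: if_splits)
  ultimately show ?thesis
    by (simp add: degree_eq_card_nbrs card_Un_Int[OF finite_nbrs finite_nbrs])
qed

lemma inj_on_degree_common_nbrs: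
  assumes "{x, y} \<in> E"
  shows "inj_on deg (nbrs x \<inter> nbrs y)"
proof (rule inj_onI, rule ccontr)
  fix z z' assume z: "z \<in> nbrs x \<inter> nbrs y" "z' \<in> nbrs x \<inter> nbrs y" "deg z = deg z'" "z \<noteq> z'"
  then have "path3 E z z'"
    using assms not_in_nbrs_self by (intro path3I[of z x y z']) (auto simp: nbrs_edge)
  then show False
    using path3_degree_ne z(3) by blast
qed

lemma common_nbr_nbrs_subset:
  assumes xy: "{x, y} \<in> E" "deg x = deg y" and z: "z \<in> nbrs x \<inter> nbrs y"
  shows "nbrs z \<subseteq> {x, y} \<union> (V - (nbrs x \<union> nbrs y))"
proof
  fix w assume w: "w \<in> nbrs z"
  have "x \<noteq> y"
    using edge_vertices(3)[OF xy(1)] .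
  have no_path: "\<not> path3 E x y"
    using xy(2) path3_degree_ne by blast
  have "z \<noteq> x" "z \<noteq> y"
    using z not_in_nbrs_self by blast+
  have "w \<notin> nbrs y - {x}"
  proof
    assume "w \<in> nbrs y - {x}"
    then have "path3 E x y"
      using w z \<open>x \<noteq> y\<close> \<open>z \<noteq> y\<close> by (intro path3I[of x z w y]) (auto simp: nbrs_edge)
    with no_path show False ..
  qed
  moreover have "w \<notin> nbrs x - {y}"
  proof
    assume "w \<in> nbrs x - {y}"
    then have "path3 E x y"
      using w z \<open>x \<noteq> y\<close> \<open>z \<noteq> x\<close> by (intro path3I[of x w z y]) (auto simp: nbrs_edge)
    with no_path show False ..
  qed
  ultimately show "w \<in> {x, y} \<union> (V - (nbrs x \<union> nbrs y))"
    using w nbrs_subset by blast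
qed

lemma adjacent_equal_degree_le:
  assumes xy: "{x, y} \<in> E" "deg x = deg y"
  shows "2 * deg x \<le> card V + 1"
proof -
  define Z where "Z = nbrs x \<inter> nbrs y"
  define R where "R = V - (nbrs x \<union> nbrs y)"
  have "x \<noteq> y"
    using edge_vertices(3)[OF xy(1)] .
  have "finite R"
    unfolding R_def using finite_vertices by simp
  have "deg z \<in> {2..card R + 2}" if "z \<in> Z" for z
  proof -
    have "{x, y} \<subseteq> nbrs z"
      using that nbrs_sym unfolding Z_def by blast
    then have "card {x, y} \<le> deg z"
      by (rule card_le_degree)
    moreover have "deg z \<le> card ({x, y} \<union> R)"
      using common_nbr_nbrs_subset[OF xy] that \<open>finite R\<close> unfolding Z_def R_def
      by (intro degree_le_card) auto
    moreover have "card ({x, y} \<union> R) \<le> card {x, y} + card R"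
      by (rule card_Un_le)
    ultimately show ?thesis
      using \<open>x \<noteq> y\<close> by simp
  qed
  then have "card Z \<le> card R + 1"
    using card_inj_on_le[OF inj_on_degree_common_nbrs[OF xy(1)], of "{2..card R + 2}"]
    unfolding Z_def by fastforce
  moreover have "card R + card (nbrs x \<union> nbrs y) = card V"
  proof -
    have "nbrs x \<union> nbrs y \<subseteq> V"
      using nbrs_subset by blast
    then show ?thesis
      unfolding R_def using card_Diff_subset[of "nbrs x \<union> nbrs y" V] card_mono[OF finite_vertices]
        finite_nbrs by fastforce
  qed
  moreover have "card (nbrs x \<union> nbrs y) + card Z = deg x + deg y"
    unfolding Z_def degree_eq_card_nbrs by (rule card_Un_Int[OF finite_nbrs finite_nbrs, symmetric])
  ultimately show ?thesis
    using xy(2) by linarith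
qed

end

locale max_degree_vertex = equal_degree_path3_free +
  fixes x :: 'a
  assumes x_in_V: "x \<in> V"
    and degree_le_max: "v \<in> V \<Longrightarrow> deg v \<le> deg x"
begin

abbreviation A :: "'a set" where "A \<equiv> nbrs x"

definition B :: "'a set" where "B = V - A - {x}"

lemma finite_B: "finite B"
  unfolding B_def using finite_vertices by simp

lemma B_subset: "B \<subseteq> V"
  unfolding B_def by blast

lemma card_A: "card A = deg x"
  by (simp add: degree_eq_card_nbrs)

lemma x_not_in_A: "x \<notin> A"
  by (rule not_in_nbrs_self)

lemma x_in_nbrs: "a \<in> A \<Longrightarrow> x \<in> nbrs a"
  using nbrs_sym by blast

lemma not_in_nbrs_x: "b \<in> B \<Longrightarrow> b \<notin> nbrs x"
  unfolding B_def by blast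

lemma vertices_split: "V = insert x (A \<union> B)" "x \<notin> A \<union> B" "A \<inter> B = {}"
  unfolding B_def using x_in_V nbrs_subset x_not_in_A by auto

lemma card_vertices_split: "card V = deg x + card B + 1"
proof -
  have "card V = card (insert x (A \<union> B))"
    by (rule arg_cong[where f = card, OF vertices_split(1)])
  also have "\<dots> = card (A \<union> B) + 1"
    using vertices_split(2) finite_B finite_nbrs by simp
  also have "card (A \<union> B) = deg x + card B"
    using vertices_split(3) finite_B finite_nbrs card_A by (simp add: card_Un_disjoint)
  finally show ?thesis .
qed

lemma sum_degree_split: "(\<Sum>v\<in>V. deg v) = deg x + (\<Sum>a\<in>A. deg a) + (\<Sum>b\<in>B. deg b)"
proof -
  have "(\<Sum>v\<in>V. deg v) = (\<Sum>v\<in>insert x (A \<union> B). deg v)"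
    by (rule arg_cong[where f = "sum deg", OF vertices_split(1)])
  also have "\<dots> = deg x + (\<Sum>v\<in>A \<union> B. deg v)"
    using vertices_split(2) finite_B finite_nbrs by simp
  also have "(\<Sum>v\<in>A \<union> B. deg v) = (\<Sum>a\<in>A. deg a) + (\<Sum>b\<in>B. deg b)"
    using vertices_split(3) finite_B finite_nbrs by (simp add: sum.union_disjoint)
  finally show ?thesis
    by simp
qed

lemma degree_ne_through_x:
  assumes "a \<in> A" "b \<in> A" "{b, c} \<in> E" "a \<noteq> b" "a \<noteq> c" "c \<noteq> x"
  shows "deg a \<noteq> deg c"
proof -
  have "{a, x} \<in> E" "{x, b} \<in> E" "a \<noteq> x"
    using assms(1,2) nbrs_edge x_not_in_A by blast+
  then have "path3 E a c"
    using assms(3-6) by (intro path3I[of a x b c]) auto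
  then show ?thesis
    by (rule path3_degree_ne)
qed

lemma nbr_degree_lt:
  assumes "card V + 2 \<le> 2 * deg x" "a \<in> A"
  shows "deg a < deg x"
proof -
  have "deg a \<le> deg x"
    using assms(2) nbrs_subset degree_le_max by blast
  moreover have "deg a \<noteq> deg x"
    using adjacent_equal_degree_le[of x a] assms nbrs_edge by fastforce
  ultimately show ?thesis
    by simp
qed

lemma equal_degree_nbrs_le:
  assumes "a \<in> A" "a' \<in> A" "a \<noteq> a'" "deg a = deg a'"
  shows "deg x + deg a \<le> card V + (if a \<in> nbrs a' then 1 else 0)"
proof -
  have "x \<noteq> a'"
    using assms(2) x_not_in_A by blast
  then show ?thesis
    using degree_add_degree_le[of a a' x] assms x_in_nbrs by (simp add: add.commute)
qed

lemma card_equal_degree_nbrs_le_2: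
  assumes "card V < deg x + d"
  shows "card {a\<in>A. deg a = d} \<le> 2"
proof (rule ccontr)
  assume "\<not> ?thesis"
  then have "3 \<le> card {a\<in>A. deg a = d}"
    by simp
  then obtain T where T: "T \<subseteq> {a\<in>A. deg a = d}" "card T = 3"
    by (rule obtain_subset_with_card_n)
  then obtain u v w where "T = {u, v, w}" "u \<noteq> v" "v \<noteq> w" "u \<noteq> w"
    by (meson card_3_iff)
  with T(1) have uvw: "u \<in> A" "v \<in> A" "w \<in> A" "deg u = d" "deg v = d" "deg w = d"
    "u \<noteq> v" "u \<noteq> w" "v \<noteq> w"
    by auto
  have "u \<in> nbrs w"
    using equal_degree_nbrs_le[of u w] uvw assms by (simp split: if_splits)
  then have "{w, u} \<in> E"
    using nbrs_edge by blast
  then show False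
    using degree_ne_through_x[of v w u] uvw x_not_in_A by blast
qed

lemma inj_on_degree_high_nbrs: "inj_on deg {a\<in>A. card V + 1 < deg x + deg a}"
proof (rule inj_onI, rule ccontr)
  fix a a' assume "a \<in> {a\<in>A. card V + 1 < deg x + deg a}" "a' \<in> {a\<in>A. card V + 1 < deg x + deg a}"
    "deg a = deg a'" "a \<noteq> a'"
  then show False
    using equal_degree_nbrs_le[of a a'] by (simp split: if_splits)
qed

definition adj_A :: "'a set" where
  "adj_A = {v\<in>V. nbrs v \<inter> A \<noteq> {}}"

lemma nbrs_of_A_subset:
  assumes "a \<in> A"
  shows "nbrs a \<subseteq> insert x ((nbrs a \<inter> A) \<union> (B \<inter> adj_A))"
proof
  fix w assume w: "w \<in> nbrs a"
  then have "w \<in> V" "a \<in> nbrs w \<inter> A"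
    using assms nbrs_subset nbrs_sym by blast+
  then show "w \<in> insert x ((nbrs a \<inter> A) \<union> (B \<inter> adj_A))"
    using w unfolding B_def adj_A_def by blast
qed

lemma degree_le_if_not_adj_A:
  assumes "a \<in> A - adj_A"
  shows "deg a \<le> 1 + card (B \<inter> adj_A)"
proof -
  have "nbrs a \<inter> A = {}"
    using assms nbrs_subset unfolding adj_A_def by blast
  then have "nbrs a \<subseteq> insert x (B \<inter> adj_A)"
    using nbrs_of_A_subset[of a] assms by blast
  then have "deg a \<le> card (insert x (B \<inter> adj_A))"
    using finite_B by (intro degree_le_card) auto
  then show ?thesis
    using card_insert_le_Suc[of x "B \<inter> adj_A"] by linarith
qed

lemma degree_le_if_adj_A:
  assumes a: "a \<in> A \<inter> adj_A"
  shows "deg a \<le> card (A \<inter> adj_A) + card (B \<inter> adj_A)"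
proof -
  have "nbrs a \<inter> A \<subseteq> (A \<inter> adj_A) - {a}"
  proof
    fix w assume w: "w \<in> nbrs a \<inter> A"
    then have "a \<in> nbrs w \<inter> A" "w \<noteq> a" "w \<in> V"
      using a nbrs_sym not_in_nbrs_self nbrs_subset by blast+
    then show "w \<in> (A \<inter> adj_A) - {a}"
      using w unfolding adj_A_def by blast
  qed
  then have "nbrs a \<subseteq> insert x (((A \<inter> adj_A) - {a}) \<union> (B \<inter> adj_A))"
    using nbrs_of_A_subset[of a] a by blast
  then have "deg a \<le> card (insert x (((A \<inter> adj_A) - {a}) \<union> (B \<inter> adj_A)))"
    using finite_nbrs finite_B by (intro degree_le_card) auto
  also have "\<dots> \<le> 1 + (card ((A \<inter> adj_A) - {a}) + card (B \<inter> adj_A))"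
    using card_insert_le_Suc[of x "((A \<inter> adj_A) - {a}) \<union> (B \<inter> adj_A)"]
      card_Un_le[of "(A \<inter> adj_A) - {a}" "B \<inter> adj_A"] by linarith
  also have "\<dots> = card (A \<inter> adj_A) + card (B \<inter> adj_A)"
    using a card_Diff1_less[of "A \<inter> adj_A" a] card_Diff_singleton[OF a] finite_nbrs by simp
  finally show ?thesis .
qed

lemma degree_lt_if_not_adj_A:
  assumes b: "b \<in> B - adj_A"
  shows "deg b < card B"
proof -
  have "nbrs b \<subseteq> B - {b}"
  proof
    fix w assume w: "w \<in> nbrs b"
    have "nbrs b \<inter> A = {}"
      using b B_subset unfolding adj_A_def by blast
    moreover have "w \<noteq> x"
      using w b not_in_nbrs_x nbrs_sym by blast
    moreover have "w \<noteq> b"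
      using w not_in_nbrs_self by blast
    ultimately show "w \<in> B - {b}"
      using w nbrs_subset unfolding B_def by blast
  qed
  then have "deg b \<le> card (B - {b})"
    using finite_B by (intro degree_le_card) auto
  then show ?thesis
    using b finite_B card_Diff1_less[of B b] by simp
qed

lemma nbrs_of_max_degree_B_vertex:
  assumes q: "q \<in> B" "deg q = deg x"
  shows "nbrs q \<subseteq> (A - adj_A) \<union> (B - adj_A)"
proof
  fix p assume p: "p \<in> nbrs q"
  have "p \<noteq> x"
    using p q(1) not_in_nbrs_x nbrs_sym by blast
  have "nbrs p \<inter> A = {}"
  proof (rule ccontr)
    assume "nbrs p \<inter> A \<noteq> {}"
    then obtain a where a: "a \<in> nbrs p" "a \<in> A"
      by blast
    have "a \<noteq> q" "x \<noteq> q"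
      using a(2) q(1) not_in_nbrs_x vertices_split(2) by blast+
    then have "path3 E x q"
      using a p \<open>p \<noteq> x\<close> nbrs_edge by (intro path3I[of x a p q]) auto
    then show False
      using path3_degree_ne q(2) by metis
  qed
  then show "p \<in> (A - adj_A) \<union> (B - adj_A)"
    using p \<open>p \<noteq> x\<close> nbrs_subset unfolding adj_A_def B_def by blast
qed

lemma card_A_adj_le_if_B_max_degree:
  assumes "q \<in> B" "deg q = deg x"
  shows "card (A \<inter> adj_A) \<le> card (B - adj_A)"
proof -
  have "deg q \<le> card ((A - adj_A) \<union> (B - adj_A))"
    using nbrs_of_max_degree_B_vertex[OF assms] finite_nbrs finite_B by (intro degree_le_card) auto
  also have "\<dots> \<le> card (A - adj_A) + card (B - adj_A)"
    by (rule card_Un_le)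
  finally show ?thesis
    using assms(2) card_A card_Int_Diff[OF finite_nbrs, of x adj_A] by linarith
qed

lemma two_le_card_A_adj:
  assumes "a \<in> A" "a' \<in> A" "{a, a'} \<in> E"
  shows "2 \<le> card (A \<inter> adj_A)"
proof -
  have "a \<noteq> a'"
    using assms(3) edge_vertices(3) by blast
  moreover have "{a, a'} \<subseteq> A \<inter> adj_A"
    using assms nbrs_subset in_nbrs_iff edge_commute unfolding adj_A_def by blast
  ultimately show ?thesis
    using card_mono[of "A \<inter> adj_A" "{a, a'}"] finite_nbrs by fastforce
qed

(* Degrees in A above k + 1 are pairwise distinct, so their excesses over k are distinct values in
   {2..deg x - k - 1}; X collects excess values known not to occur. *)
lemma sum_nbrs_degree_le:
  assumes deg_A: "\<And>a. a \<in> A \<Longrightarrow> deg a < deg x" and k: "card V = deg x + k"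
    and excluded: "\<And>a. a \<in> A \<Longrightarrow> deg a - k \<notin> X"
  shows "(\<Sum>a\<in>A. deg a) \<le> k * deg x + card {a\<in>A. deg a = k + 1} + \<Sum>({2..deg x - k - 1} - X)"
proof -
  define e where "e a = deg a - k" for a
  define H where "H = {a\<in>A. k + 2 \<le> deg a}"
  define K where "K = {a\<in>A. deg a = k + 1}"
  have "H \<subseteq> A" "K \<subseteq> A - H"
    unfolding H_def K_def by auto
  have "(\<Sum>a\<in>A. deg a) \<le> (\<Sum>a\<in>A. k + e a)"
    unfolding e_def by (intro sum_mono) simp
  also have "\<dots> = k * deg x + (\<Sum>a\<in>H. e a) + (\<Sum>a\<in>A - H. e a)"
    using sum.subset_diff[OF \<open>H \<subseteq> A\<close> finite_nbrs, of e] card_A by (simp add: sum.distrib)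
  also have "(\<Sum>a\<in>A - H. e a) \<le> (\<Sum>a\<in>A - H. if a \<in> K then 1 else 0)"
    unfolding e_def H_def K_def by (intro sum_mono) auto
  also have "\<dots> = card K"
    using \<open>K \<subseteq> A - H\<close> finite_nbrs by (simp add: sum.If_cases Int_absorb1)
  also have "(\<Sum>a\<in>H. e a) \<le> \<Sum>({2..deg x - k - 1} - X)"
  proof (rule sum_inj_on_le_sum)
    have "H \<subseteq> {a\<in>A. card V + 1 < deg x + deg a}"
      unfolding H_def k by auto
    then have "inj_on deg H"
      using inj_on_degree_high_nbrs inj_on_subset by blast
    then show "inj_on e H"
      unfolding inj_on_def e_def H_def by fastforce
    show "e ` H \<subseteq> {2..deg x - k - 1} - X"
      using deg_A excluded unfolding e_def H_def by fastforce
  qed simp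
  finally show ?thesis
    unfolding K_def by linarith
qed

lemma nbr_in_A_if_B_empty: "B = {} \<Longrightarrow> w \<in> nbrs a \<Longrightarrow> w \<noteq> x \<Longrightarrow> w \<in> A"
  using nbrs_subset vertices_split(1) by blast

lemma inj_on_degree_ge_3_if_B_empty:
  assumes B: "B = {}"
  shows "inj_on deg {a\<in>A. 3 \<le> deg a}"
proof (rule inj_onI, rule ccontr)
  fix a a' assume a: "a \<in> {a\<in>A. 3 \<le> deg a}" "a' \<in> {a\<in>A. 3 \<le> deg a}" "deg a = deg a'" "a \<noteq> a'"
  have "\<not> nbrs a' \<subseteq> {x, a}"
    using a(2) degree_le_card[of "{x, a}" a'] card_insert_le_Suc[of x "{a}"] by auto
  then obtain c where c: "c \<in> nbrs a'" "c \<noteq> x" "c \<noteq> a"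
    by blast
  have "a \<in> A" "a' \<noteq> x"
    using a(1,2) x_not_in_A by blast+
  then show False
    using degree_ne_through_x[of a c a'] nbr_in_A_if_B_empty[OF B] c a nbrs_edge by blast
qed

lemma degree_le_if_B_empty:
  assumes B: "B = {}" and "2 < deg x" and a: "a \<in> A" "3 \<le> deg a"
  shows "deg a \<le> card {a\<in>A. 3 \<le> deg a} + 1"
proof -
  define M where "M = {a\<in>A. 3 \<le> deg a}"
  define D2 where "D2 = {c \<in> nbrs a. deg c = 2}"
  have "\<forall>c\<in>D2. \<forall>c'\<in>D2. c = c'"
  proof (intro ballI, rule ccontr)
    fix c c' assume "c \<in> D2" "c' \<in> D2" "c \<noteq> c'"
    moreover have "c \<noteq> x" "c' \<noteq> x" "c \<noteq> a"
      using \<open>c \<in> D2\<close> \<open>c' \<in> D2\<close> \<open>2 < deg x\<close> not_in_nbrs_self unfolding D2_def by auto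
    ultimately show False
      using degree_ne_through_x[of c a c'] nbr_in_A_if_B_empty[OF B] a(1) nbrs_edge
      unfolding D2_def by auto
  qed
  moreover have "finite D2"
    unfolding D2_def using finite_nbrs by simp
  ultimately have "card D2 \<le> 1"
    using card_le_Suc0_iff_eq by auto
  have "nbrs a \<subseteq> insert x ((M - {a}) \<union> D2)"
  proof
    fix w assume w: "w \<in> nbrs a"
    show "w \<in> insert x ((M - {a}) \<union> D2)"
    proof (cases "w = x")
      case False
      then have "w \<in> A" "{x, a} \<subseteq> nbrs w" "w \<noteq> a"
        using nbr_in_A_if_B_empty[OF B] w nbrs_sym a(1) not_in_nbrs_self by blast+
      moreover have "x \<noteq> a"
        using a(1) x_not_in_A by blast
      ultimately have "2 \<le> deg w"
        using card_le_degree[of "{x, a}" w] by simp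
      with \<open>w \<in> A\<close> \<open>w \<noteq> a\<close> show ?thesis
        using w unfolding M_def D2_def by auto
    qed simp
  qed
  then have "deg a \<le> card (insert x ((M - {a}) \<union> D2))"
    unfolding M_def D2_def using finite_nbrs by (intro degree_le_card) auto
  also have "\<dots> \<le> 1 + (card (M - {a}) + card D2)"
    using card_insert_le_Suc[of x "(M - {a}) \<union> D2"] card_Un_le[of "M - {a}" D2] by linarith
  also have "\<dots> \<le> card M + 1"
    using \<open>card D2 \<le> 1\<close> card_Diff1_less[of M a] a finite_nbrs unfolding M_def by simp
  finally show ?thesis
    unfolding M_def .
qed

lemma degree_le_2_if_B_empty:
  assumes B: "B = {}" and "2 < deg x" and "a \<in> A"
  shows "deg a \<le> 2"
proof -
  define M where "M = {a\<in>A. 3 \<le> deg a}"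
  have "deg ` M \<subseteq> {3..card M + 1}"
    using degree_le_if_B_empty[OF assms(1,2)] unfolding M_def by auto
  then have "card M \<le> card {3..card M + 1}"
    using card_inj_on_le[OF inj_on_degree_ge_3_if_B_empty[OF B] _ finite_atLeastAtMost] unfolding M_def
    by blast
  then have "card M = 0"
    by simp
  moreover have "finite M"
    unfolding M_def using finite_nbrs by simp
  ultimately have "M = {}"
    by simp
  then show ?thesis
    using assms(3) unfolding M_def by auto
qed

lemma B_vertex_degree_le:
  assumes "q \<in> B"
  shows "deg q + 1 \<le> card (nbrs q \<inter> A) + card B"
proof -
  have "nbrs q \<subseteq> (nbrs q \<inter> A) \<union> (B - {q})"
    using assms nbrs_subset not_in_nbrs_self not_in_nbrs_x nbrs_sym unfolding B_def by blast
  then have "deg q \<le> card ((nbrs q \<inter> A) \<union> (B - {q}))"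
    using finite_nbrs finite_B by (intro degree_le_card) auto
  also have "\<dots> \<le> card (nbrs q \<inter> A) + card (B - {q})"
    by (rule card_Un_le)
  finally show ?thesis
    using assms card_Diff1_less[OF finite_B assms] by linarith
qed

lemma A_degree_ne_if_two_nbrs:
  assumes "q \<in> B" "2 \<le> card (nbrs q \<inter> A)" "a \<in> A"
  shows "deg a \<noteq> deg q"
proof -
  have "\<not> nbrs q \<inter> A \<subseteq> {a}"
    using assms(2) card_mono[of "{a}" "nbrs q \<inter> A"] by auto
  then obtain a' where "a' \<in> nbrs q" "a' \<in> A" "a' \<noteq> a"
    by blast
  moreover have "a \<noteq> q" "q \<noteq> x"
    using assms(1,3) vertices_split by blast+
  ultimately show ?thesis
    using degree_ne_through_x[of a a' q] assms(3) nbrs_edge by blast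
qed

end

(* l and j count the vertices of A without and with a neighbour in A, b0 and b1 those of B, r = card B. *)
lemma arith_max_degree_B_vertex_int:
  fixes D l j b0 b1 r n :: int
  assumes "l + j = D" "b0 + b1 = r" "2 \<le> j" "j \<le> b0" "n \<le> D" "r + D + 1 = 2 * n"
    and "0 \<le> l" "0 \<le> b1"
  shows "D + l * (1 + b1) + j * (j + b1) + b0 * r + b1 * D + 2 < 2 * n\<^sup>2 + b0"
proof -
  have l: "l = D - j" and b1: "b1 = r - b0" and r: "r = 2 * n - D - 1"
    using assms by linarith+
  have T: "D + l * (1 + b1) + j * (j + b1) + b0 * r + b1 * D
      = 4 * (n * D) - 2 * (D * D) - 3 * (b0 * D) + j * j - j + 2 * (n * b0) - b0"
    unfolding l b1 r by (simp add: algebra_simps)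
  have "j * (j - 1) \<le> b0 * (D - 1)"
    using assms by (intro mult_mono) auto
  then have i1: "j * j - j \<le> b0 * D - b0"
    by (simp add: algebra_simps)
  have "0 \<le> (n - D)\<^sup>2"
    by simp
  then have i2: "2 * (n * D) - D * D \<le> n * n"
    by (simp add: power2_eq_square algebra_simps)
  have "b0 * (n - D) \<le> 0"
    using assms by (intro mult_nonneg_nonpos) auto
  then have i3: "n * b0 - b0 * D \<le> 0"
    by (simp add: algebra_simps)
  have "n\<^sup>2 = n * n"
    by (simp add: power2_eq_square)
  then show ?thesis
    using T i1 i2 i3 assms(3,4) by linarith
qed

lemma arith_max_degree_B_vertex:
  fixes D l j b0 b1 r n :: nat
  assumes "l + j = D" "b0 + b1 = r" "2 \<le> j" "j \<le> b0" "n \<le> D" "r + D + 1 = 2 * n"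
  shows "D + l * (1 + b1) + j * (j + b1) + b0 * r + b1 * D + 2 < 2 * n\<^sup>2 + b0"
proof -
  have "int D + int l * (1 + int b1) + int j * (int j + int b1) + int b0 * int r + int b1 * int D + 2
      < 2 * (int n)\<^sup>2 + int b0"
    using assms by (intro arith_max_degree_B_vertex_int) linarith+
  then have "int (D + l * (1 + b1) + j * (j + b1) + b0 * r + b1 * D + 2) < int (2 * n\<^sup>2 + b0)"
    by (simp add: algebra_simps)
  then show ?thesis
    by (simp only: of_nat_less_iff)
qed

lemma mult_complement_square:
  fixes D m n :: nat
  assumes "D + m = 2 * n" "n \<le> D"
  shows "D * m + (D - n)\<^sup>2 = n\<^sup>2"
proof -
  define k where "k = D - n"
  then have "n = m + k" "D = m + 2 * k"
    using assms by simp_all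
  then show ?thesis
    unfolding k_def[symmetric] by (simp add: power2_eq_square algebra_simps)
qed

lemma four_n_square:
  fixes b s n :: nat
  assumes "2 * b + s + 3 = 2 * n"
  shows "4 * n\<^sup>2 = 4 * (b * b) + 4 * (b * s) + s * s + 12 * b + 6 * s + 9"
proof -
  have "4 * n\<^sup>2 = (2 * b + s + 3)\<^sup>2"
    using assms by (simp add: power2_eq_square algebra_simps)
  then show ?thesis
    by (simp add: power2_eq_square algebra_simps)
qed

(* In the three lemmas below D = deg x, b = card B, s = D - b - 2 and S = \<Sum>{2..s}. *)
lemma arith_top_degree_in_B_eq:
  fixes D b s S n :: nat
  assumes "D = b + s + 2" "D + b + 1 = 2 * n" "2 * S + 2 = s * (s + 1)" "1 \<le> b" "1 \<le> s"
  shows "D + (b + 1) * D + S + b * (b + 2) + 2 < 2 * n\<^sup>2"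
proof -
  define L where "L = D + (b + 1) * D + S + b * (b + 2) + 2"
  have "2 * L = 4 * (b * b) + 2 * (b * s) + 12 * b + 4 * s + 12 + 2 * S"
    unfolding L_def assms(1) by (simp add: algebra_simps)
  moreover have "2 * S + 2 = s * s + s"
    using assms(3) by (simp add: algebra_simps)
  moreover have "1 \<le> b * s"
    using assms(4,5) by simp
  moreover have "4 * n\<^sup>2 = 4 * (b * b) + 4 * (b * s) + s * s + 12 * b + 6 * s + 9"
    using assms(1,2) by (intro four_n_square) simp
  ultimately have "L < 2 * n\<^sup>2"
    by linarith
  then show ?thesis
    unfolding L_def .
qed

lemma arith_top_degree_in_B_gt:
  fixes D b s S n e :: nat
  assumes "D = b + s + 2" "D + b + 1 = 2 * n" "2 * S + 2 = s * (s + 1)" "1 \<le> b" "2 \<le> e" "e \<le> s"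
  shows "D + (b + 1) * D + S + 4 + b * (b + 1 + e) < 2 * n\<^sup>2 + e"
proof -
  define L where "L = D + (b + 1) * D + S + 4 + b * (b + 1 + e)"
  have "2 * L
      = 4 * (b * b) + 2 * (b * s) + 10 * b + 4 * s + 16 + 2 * S + 2 * (b * e)"
    unfolding L_def assms(1) by (simp add: algebra_simps)
  moreover have "2 * S + 2 = s * s + s"
    using assms(3) by (simp add: algebra_simps)
  moreover have "b * e \<le> b * s" "b \<le> b * s"
    using assms(4-6) by simp_all
  moreover have "4 * n\<^sup>2 = 4 * (b * b) + 4 * (b * s) + s * s + 12 * b + 6 * s + 9"
    using assms(1,2) by (intro four_n_square) simp
  ultimately have "L < 2 * n\<^sup>2 + e"
    using assms(4-6) by linarith
  then show ?thesis
    unfolding L_def .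
qed

lemma arith_top_degree_in_B_le:
  fixes D b s S n c :: nat
  assumes "D = b + s + 2" "D + b + 1 = 2 * n" "2 * S + 2 = s * (s + 1)" "1 \<le> b" "1 \<le> s"
    "c \<le> b + 1" "b \<noteq> 1 \<or> s \<noteq> 1"
  shows "D + (b + 1) * D + S + 4 + b * c < 2 * n\<^sup>2"
proof -
  define L where "L = D + (b + 1) * D + S + 4 + b * c"
  have "2 * L
      = 2 * (b * b) + 2 * (b * s) + 8 * b + 4 * s + 16 + 2 * S + 2 * (b * c)"
    unfolding L_def assms(1) by (simp add: algebra_simps)
  moreover have "2 * S + 2 = s * s + s"
    using assms(3) by (simp add: algebra_simps)
  moreover have "b * c \<le> b * b + b"
    using assms(6) mult_le_mono2[of c "b + 1" b] by simp
  moreover have "b \<le> b * s" "s \<le> b * s"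
    using assms(4,5) by simp_all
  moreover have "5 < 2 * b + 2 * (b * s) + s"
    using assms(4,5,7) \<open>b \<le> b * s\<close> \<open>s \<le> b * s\<close> by linarith
  moreover have "4 * n\<^sup>2 = 4 * (b * b) + 4 * (b * s) + s * s + 12 * b + 6 * s + 9"
    using assms(1,2) by (intro four_n_square) simp
  ultimately have "L < 2 * n\<^sup>2"
    by linarith
  then show ?thesis
    unfolding L_def .
qed

locale extremal_graph = equal_degree_path3_free +
  fixes n :: nat
  assumes n_ge_3: "3 \<le> n"
    and card_V: "card V = 2 * n"
    and card_E: "n\<^sup>2 - 1 \<le> card E"
begin

lemma sum_degree_ge: "2 * n\<^sup>2 \<le> (\<Sum>v\<in>V. deg v) + 2"
proof -
  have "1 \<le> n\<^sup>2"
    using n_ge_3 by simp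
  then show ?thesis
    using card_E sum_degree by linarith
qed

end

locale extremal_max = extremal_graph V E n + max_degree_vertex V E x
  for V :: "'a set" and E n x
begin

lemma card_B: "card B + deg x + 1 = 2 * n"
  using card_vertices_split card_V by simp

lemma max_degree_ge: "n \<le> deg x"
proof (rule ccontr)
  assume "\<not> n \<le> deg x"
  then have "deg v \<le> n - 1" if "v \<in> V" for v
    using degree_le_max[OF that] by linarith
  then have "(\<Sum>v\<in>V. deg v) \<le> 2 * n * (n - 1)"
    using sum_bounded_above[of V deg "n - 1"] card_V by simp
  moreover have "2 * n * (n - 1) + 2 < 2 * n\<^sup>2"
    using n_ge_3 by (cases n) (auto simp: power2_eq_square algebra_simps)
  ultimately show False
    using sum_degree_ge by linarith
qed

lemma independent_nbrs_degree_bound: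
  assumes indep: "\<forall>a\<in>A. \<forall>a'\<in>A. {a, a'} \<notin> E"
  shows "\<And>a. a \<in> A \<Longrightarrow> nbrs a \<subseteq> V - A"
    and "2 * n\<^sup>2 \<le> (\<Sum>a\<in>A. deg a) + card (V - A) * deg x + 2"
proof -
  show nbrs_a: "nbrs a \<subseteq> V - A" if "a \<in> A" for a
    using that indep nbrs_subset nbrs_edge by blast
  have "(\<Sum>v\<in>V. deg v) = (\<Sum>a\<in>A. deg a) + (\<Sum>v\<in>V - A. deg v)"
    using sum.subset_diff[OF nbrs_subset finite_vertices, of deg x] by simp
  moreover have "(\<Sum>v\<in>V - A. deg v) \<le> card (V - A) * deg x"
    using sum_bounded_above[of "V - A" deg "deg x"] degree_le_max by simp
  ultimately show "2 * n\<^sup>2 \<le> (\<Sum>a\<in>A. deg a) + card (V - A) * deg x + 2"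
    using sum_degree_ge by linarith
qed

lemma card_complement_A: "deg x + card (V - A) = 2 * n"
  using card_Diff_subset[OF finite_nbrs nbrs_subset, of x] card_mono[OF finite_vertices nbrs_subset, of x]
    card_A card_V by simp

lemma independent_nbrs_max_degree_le:
  assumes indep: "\<forall>a\<in>A. \<forall>a'\<in>A. {a, a'} \<notin> E"
  shows "deg x \<le> n + 1"
proof -
  have "deg a \<le> card (V - A)" if "a \<in> A" for a
    using independent_nbrs_degree_bound(1)[OF indep that] finite_vertices by (simp add: degree_le_card)
  then have "(\<Sum>a\<in>A. deg a) \<le> deg x * card (V - A)"
    using sum_bounded_above[of A deg "card (V - A)"] card_A by simp
  then have "2 * n\<^sup>2 \<le> 2 * (deg x * card (V - A)) + 2"
    using independent_nbrs_degree_bound(2)[OF indep] by (simp add: mult.commute)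
  then have "(deg x - n)\<^sup>2 \<le> 1"
    using mult_complement_square[OF card_complement_A max_degree_ge] by linarith
  then have "deg x - n \<le> 1"
    using power_le_one_iff[of "deg x - n" 2] by simp
  then show ?thesis
    by simp
qed

lemma independent_nbrs_two_large_degrees:
  assumes indep: "\<forall>a\<in>A. \<forall>a'\<in>A. {a, a'} \<notin> E" and deg_x: "deg x = n"
  obtains a a' where "a \<in> A" "deg a = n" "a' \<in> A" "a' \<noteq> a" "2 \<le> deg a'"
proof -
  have deg_A: "deg a \<le> n" if "a \<in> A" for a
    using degree_le_card[OF finite_Diff[OF finite_vertices] independent_nbrs_degree_bound(1)[OF indep that]]
      card_complement_A deg_x by simp
  have sum_A: "n * n \<le> (\<Sum>a\<in>A. deg a) + 2"
    using independent_nbrs_degree_bound(2)[OF indep] card_complement_A deg_x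
    by (simp add: power2_eq_square)
  have "\<exists>a\<in>A. deg a = n"
  proof (rule ccontr)
    assume "\<not> ?thesis"
    then have "deg a \<le> n - 1" if "a \<in> A" for a
      using that deg_A[OF that] by fastforce
    then have "(\<Sum>a\<in>A. deg a) \<le> n * (n - 1)"
      using sum_bounded_above[of A deg "n - 1"] card_A deg_x by simp
    moreover have "n * (n - 1) + 2 < n * n"
      using n_ge_3 by (auto simp: algebra_simps dest!: le_Suc_ex)
    ultimately show False
      using sum_A by linarith
  qed
  then obtain a where a: "a \<in> A" "deg a = n"
    by blast
  have "\<exists>a'\<in>A - {a}. 2 \<le> deg a'"
  proof (rule ccontr)
    assume no_a': "\<not> ?thesis"
    have "deg v \<le> 1" if "v \<in> A - {a}" for v
    proof -
      have "\<not> 2 \<le> deg v"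
        using that no_a' by blast
      then show ?thesis
        by simp
    qed
    then have "(\<Sum>a\<in>A. deg a) \<le> n + (n - 1)"
      using sum_le_single_plus_bound[OF finite_nbrs a(1), of deg 1] a(2) card_A deg_x by simp
    moreover have "n + (n - 1) + 2 < n * n"
      using n_ge_3 by (auto simp: algebra_simps dest!: le_Suc_ex)
    ultimately show False
      using sum_A by linarith
  qed
  then show ?thesis
    using that a by blast
qed

lemma independent_nbrs_max_degree_ne_n:
  assumes indep: "\<forall>a\<in>A. \<forall>a'\<in>A. {a, a'} \<notin> E"
  shows "deg x \<noteq> n"
proof
  assume deg_x: "deg x = n"
  then obtain a a' where a: "a \<in> A" "deg a = n" and a': "a' \<in> A" "a' \<noteq> a" "2 \<le> deg a'"
    using independent_nbrs_two_large_degrees[OF indep] by blast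
  have nbrs_A: "nbrs v \<subseteq> V - A" if "v \<in> A" for v
    using independent_nbrs_degree_bound(1)[OF indep that] .
  have "nbrs a = V - A"
    using card_subset_eq[OF _ nbrs_A[OF a(1)]] finite_vertices a(2) card_complement_A deg_x
    by (simp add: degree_eq_card_nbrs)
  have "\<not> nbrs a' \<subseteq> {x}"
    using a'(3) degree_le_card[of "{x}" a'] by auto
  then obtain b where b: "b \<in> nbrs a'" "b \<noteq> x"
    by blast
  have "b \<in> nbrs a"
    using b(1) nbrs_A[OF a'(1)] \<open>nbrs a = V - A\<close> by blast
  moreover have "a \<noteq> x"
    using a(1) x_not_in_A by blast
  ultimately have "path3 E a x"
    using a'(1,2) b nbrs_edge by (intro path3I[of a b a' x]) auto
  then show False
    using path3_degree_ne a(2) deg_x by metis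
qed

lemma independent_nbrs_nbrs_eq:
  assumes indep: "\<forall>a\<in>A. \<forall>a'\<in>A. {a, a'} \<notin> E" and deg_x: "deg x = n + 1" and a: "a \<in> A"
  shows "nbrs a = V - A"
proof -
  define m where "m = n - 1"
  have n: "n = m + 1"
    using n_ge_3 unfolding m_def by simp
  have card_C: "card (V - A) = m"
    using card_complement_A deg_x unfolding n by simp
  have nbrs_A: "nbrs v \<subseteq> V - A" if "v \<in> A" for v
    using independent_nbrs_degree_bound(1)[OF indep that] .
  then have deg_A: "deg v \<le> m" if "v \<in> A" for v
    using degree_le_card[OF _ nbrs_A[OF that]] finite_vertices card_C by simp
  have "2 * (m + 1)\<^sup>2 \<le> (\<Sum>v\<in>A. deg v) + m * (m + 2) + 2"
    using independent_nbrs_degree_bound(2)[OF indep] card_C deg_x unfolding n by simp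
  then have sum_A: "(m + 2) * m \<le> (\<Sum>v\<in>A. deg v)"
    by (simp add: power2_eq_square algebra_simps)
  have "deg a = m"
  proof (rule ccontr)
    assume "deg a \<noteq> m"
    then have "deg a + 1 \<le> m"
      using deg_A[OF a] by simp
    moreover have "(\<Sum>v\<in>A. deg v) \<le> deg a + (m + 1) * m"
      using sum_le_single_plus_bound[OF finite_nbrs a, of deg m] deg_A card_A deg_x n by simp
    ultimately show False
      using sum_A by (simp add: algebra_simps)
  qed
  then show ?thesis
    using card_subset_eq[OF _ nbrs_A[OF a]] finite_vertices card_C by (simp add: degree_eq_card_nbrs)
qed

lemma independent_nbrs_iso:
  assumes indep: "\<forall>a\<in>A. \<forall>a'\<in>A. {a, a'} \<notin> E" and deg_x: "deg x = n + 1"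
  shows "graph_iso V E (Kbip_verts (n - 1) (n + 1)) (Kbip_edges (n - 1) (n + 1))"
proof -
  define C where "C = V - A"
  have nbrs_a: "nbrs a = C" if "a \<in> A" for a
    using independent_nbrs_nbrs_eq[OF indep deg_x that] unfolding C_def .
  have nbrs_C: "nbrs c = A" if c: "c \<in> C" for c
  proof -
    have "A \<subseteq> nbrs c"
      using nbrs_a c nbrs_sym by blast
    moreover have "card (nbrs c) \<le> card A"
      using degree_le_max[of c] c unfolding C_def degree_eq_card_nbrs by simp
    ultimately show ?thesis
      using card_seteq[OF finite_nbrs] by blast
  qed
  have "{u, v} \<in> E \<longleftrightarrow> (u \<in> C \<longleftrightarrow> v \<notin> C)" if "u \<in> V" "v \<in> V" for u v
  proof -
    have "{u, v} \<in> E \<longleftrightarrow> v \<in> nbrs u"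
      using in_nbrs_iff[of v u] edge_commute[of u v] by blast
    moreover have "v \<in> nbrs u \<longleftrightarrow> (u \<in> C \<longleftrightarrow> v \<notin> C)"
    proof (cases "u \<in> C")
      case True
      then show ?thesis
        using nbrs_C[OF True] that(2) unfolding C_def by blast
    next
      case False
      then have "u \<in> A"
        using that(1) unfolding C_def by blast
      then show ?thesis
        using nbrs_a False by blast
    qed
    ultimately show ?thesis
      by blast
  qed
  moreover have "C \<subseteq> V" "card C = n - 1" "card (V - C) = n + 1"
    using card_complement_A card_A deg_x nbrs_subset unfolding C_def
    by (auto simp: Diff_Diff_Int Int_absorb1)
  ultimately show ?thesis
    using graph_iso_Kbip[OF finite_vertices, of C "n - 1" "n + 1" E] by blast
qed

lemma max_degree_ne_n_if_nbrs_edge: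
  assumes B_deg: "\<forall>b\<in>B. deg b \<noteq> deg x" and edge: "a \<in> A" "a' \<in> A" "{a, a'} \<in> E"
  shows "deg x \<noteq> n"
proof
  assume deg_x: "deg x = n"
  have deg_A: "deg v \<le> n" if "v \<in> A" for v
    using that nbrs_subset degree_le_max deg_x by blast
  then have sum_A: "(\<Sum>v\<in>A. deg v) \<le> n * n"
    using sum_bounded_above[of A deg n] card_A deg_x by simp
  have "deg b \<le> n - 1" if "b \<in> B" for b
    using that B_deg B_subset degree_le_max[of b] deg_x by fastforce
  moreover have "card B = n - 1"
    using card_B deg_x by simp
  ultimately have "(\<Sum>b\<in>B. deg b) \<le> (n - 1) * (n - 1)"
    using sum_bounded_above[of B deg "n - 1"] by simp
  moreover have sum_ge: "2 * n\<^sup>2 \<le> n + (\<Sum>v\<in>A. deg v) + (\<Sum>b\<in>B. deg b) + 2"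
    using sum_degree_ge sum_degree_split deg_x by simp
  ultimately have n3: "n = 3"
    using n_ge_3 sum_A by (auto simp: power2_eq_square algebra_simps dest!: le_Suc_ex)
  have "deg v = 3" if v: "v \<in> A" for v
  proof -
    have "(\<Sum>v\<in>A. deg v) \<le> deg v + 2 * 3"
      using sum_le_single_plus_bound[OF finite_nbrs v, of deg 3] deg_A card_A deg_x n3 by simp
    then show ?thesis
      using sum_ge \<open>(\<Sum>b\<in>B. deg b) \<le> _\<close> deg_A[OF v] n3 by (simp add: power2_eq_square)
  qed
  moreover obtain c where "c \<in> A" "c \<noteq> a" "c \<noteq> a'"
  proof -
    have "card {a, a'} \<le> 2"
      by (simp add: card_insert_if)
    then have "\<not> A \<subseteq> {a, a'}"
      using card_mono[of "{a, a'}" A] card_A deg_x n3 by fastforce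
    then show ?thesis
      using that by blast
  qed
  moreover have "{a', a} \<in> E" "a \<noteq> x"
    using edge x_not_in_A edge_commute by blast+
  ultimately show False
    using degree_ne_through_x[of c a' a] edge by metis
qed

lemma B_degree_ne_max_if_nbrs_edge:
  assumes edge: "a \<in> A" "a' \<in> A" "{a, a'} \<in> E" and "q \<in> B"
  shows "deg q \<noteq> deg x"
proof
  assume "deg q = deg x"
  with \<open>q \<in> B\<close> have q: "q \<in> B" "deg q = deg x"
    by simp_all
  define A0 A1 B0 B1 where "A0 = A - adj_A" and "A1 = A \<inter> adj_A" and "B0 = B - adj_A"
    and "B1 = B \<inter> adj_A"
  have card_split: "card A1 + card A0 = deg x" "card B1 + card B0 = card B"
    unfolding A0_def A1_def B0_def B1_def using card_Int_Diff finite_nbrs finite_B card_A by metis+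
  have sum_split: "(\<Sum>v\<in>A. deg v) = (\<Sum>v\<in>A1. deg v) + (\<Sum>v\<in>A0. deg v)"
    "(\<Sum>v\<in>B. deg v) = (\<Sum>v\<in>B1. deg v) + (\<Sum>v\<in>B0. deg v)"
    unfolding A0_def A1_def B0_def B1_def using sum.Int_Diff finite_nbrs finite_B by metis+
  have "card A1 \<le> card B0" "2 \<le> card A1"
    using card_A_adj_le_if_B_max_degree[OF q] two_le_card_A_adj[OF edge] unfolding A1_def B0_def
    by simp_all
  have sum_A0: "(\<Sum>v\<in>A0. deg v) \<le> card A0 * (1 + card B1)"
    using sum_bounded_above[of A0 deg, OF degree_le_if_not_adj_A] unfolding A0_def B1_def by simp
  have sum_A1: "(\<Sum>v\<in>A1. deg v) \<le> card A1 * (card A1 + card B1)"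
    using sum_bounded_above[of A1 deg, OF degree_le_if_adj_A] unfolding A1_def B1_def by simp
  have "(\<Sum>b\<in>B0. deg b + 1) \<le> card B0 * card B"
    using sum_bounded_above[of B0 "\<lambda>b. deg b + 1" "card B"] degree_lt_if_not_adj_A
    unfolding B0_def by fastforce
  moreover have "(\<Sum>b\<in>B0. deg b + 1) = (\<Sum>b\<in>B0. deg b) + card B0"
    by (simp only: sum.distrib card_eq_sum)
  ultimately have sum_B0: "(\<Sum>b\<in>B0. deg b) + card B0 \<le> card B0 * card B"
    by linarith
  have sum_B1: "(\<Sum>b\<in>B1. deg b) \<le> card B1 * deg x"
    using sum_bounded_above[of B1 deg] degree_le_max B_subset unfolding B1_def by auto
  have "2 * n\<^sup>2 + card B0 \<le> deg x + card A0 * (1 + card B1) + card A1 * (card A1 + card B1)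
      + card B0 * card B + card B1 * deg x + 2"
    using sum_degree_ge sum_degree_split sum_split sum_A0 sum_A1 sum_B0 sum_B1 by linarith
  moreover have "deg x + card A0 * (1 + card B1) + card A1 * (card A1 + card B1)
      + card B0 * card B + card B1 * deg x + 2 < 2 * n\<^sup>2 + card B0"
    using card_split \<open>2 \<le> card A1\<close> \<open>card A1 \<le> card B0\<close> max_degree_ge card_B
    by (intro arith_max_degree_B_vertex) linarith+
  ultimately show False
    by linarith
qed

lemma card_B_if_large_max_degree:
  assumes large: "n < deg x"
  shows "1 \<le> card B" "card B + 3 \<le> deg x"
proof -
  show "card B + 3 \<le> deg x"
    using card_B large by linarith
  show "1 \<le> card B"
  proof (rule ccontr)
    assume "\<not> 1 \<le> card B"
    then have B: "B = {}"
      using card_0_eq[OF finite_B] by simp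
    have deg_x: "deg x + 1 = 2 * n"
      using card_B B by simp
    have "deg a \<le> 2" if "a \<in> A" for a
      using degree_le_2_if_B_empty[OF B _ that] deg_x n_ge_3 by linarith
    then have "(\<Sum>a\<in>A. deg a) \<le> deg x * 2"
      using sum_bounded_above[of A deg 2] card_A by simp
    then have "2 * n\<^sup>2 \<le> 3 * deg x + 2"
      using sum_degree_ge sum_degree_split B by simp
    moreover have "3 * deg x + 2 < 2 * n\<^sup>2"
      using deg_x n_ge_3 by (auto simp: power2_eq_square algebra_simps dest!: le_Suc_ex)
    ultimately show False
      by linarith
  qed
qed

lemma top_B_degree_sum_bound:
  assumes large: "n < deg x" and q: "q \<in> B" "\<And>b. b \<in> B \<Longrightarrow> deg b \<le> deg q"
    and excluded: "\<And>a. a \<in> A \<Longrightarrow> deg a - (card B + 1) \<notin> X"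
  shows "2 * n\<^sup>2 \<le> deg x + (card B + 1) * deg x + card {a\<in>A. deg a = card B + 2}
    + \<Sum>({2..deg x - card B - 2} - X) + card B * deg q + 2"
proof -
  have "card V = deg x + (card B + 1)"
    using card_vertices_split by simp
  moreover have "a \<in> A \<Longrightarrow> deg a < deg x" for a
    using nbr_degree_lt card_V large by simp
  ultimately have "(\<Sum>a\<in>A. deg a) \<le> (card B + 1) * deg x + card {a\<in>A. deg a = card B + 2}
      + \<Sum>({2..deg x - card B - 2} - X)"
    using sum_nbrs_degree_le[of "card B + 1" X] excluded by (simp add: diff_diff_add)
  moreover have "(\<Sum>b\<in>B. deg b) \<le> card B * deg q"
    using sum_bounded_above[of B deg "deg q"] q(2) by simp
  ultimately show ?thesis
    using sum_degree_ge sum_degree_split by linarith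
qed

lemma top_B_degree_ne_mid:
  assumes large: "n < deg x" and q: "q \<in> B" "\<And>b. b \<in> B \<Longrightarrow> deg b \<le> deg q"
  shows "deg q \<noteq> card B + 2"
proof
  assume deg_q: "deg q = card B + 2"
  define s where "s = deg x - card B - 2"
  have "2 \<le> card (nbrs q \<inter> A)"
    using B_vertex_degree_le[OF q(1)] deg_q by simp
  then have "{a\<in>A. deg a = card B + 2} = {}"
    using A_degree_ne_if_two_nbrs[OF q(1)] deg_q by auto
  from top_B_degree_sum_bound[OF large q, of "{}", unfolded this]
  have "2 * n\<^sup>2 \<le> deg x + (card B + 1) * deg x + \<Sum>{2..s} + card B * (card B + 2) + 2"
    unfolding s_def deg_q by simp
  moreover have "deg x + (card B + 1) * deg x + \<Sum>{2..s} + card B * (card B + 2) + 2 < 2 * n\<^sup>2"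
  proof (rule arith_top_degree_in_B_eq)
    show "deg x = card B + s + 2" "1 \<le> card B" "1 \<le> s"
      using card_B_if_large_max_degree[OF large] unfolding s_def by linarith+
    then show "2 * \<Sum>{2..s} + 2 = s * (s + 1)"
      using double_sum_from_2 by simp
  qed (use card_B in linarith)
  ultimately show False
    by linarith
qed

lemma top_B_degree_lt:
  assumes large: "n < deg x" and q: "q \<in> B" "\<And>b. b \<in> B \<Longrightarrow> deg b \<le> deg q"
    and "deg q < deg x"
  shows "deg q < card B + 3"
proof (rule ccontr)
  assume "\<not> ?thesis"
  with \<open>deg q < deg x\<close> have deg_q: "card B + 3 \<le> deg q" "deg q < deg x"
    by simp_all
  define s where "s = deg x - card B - 2"
  define e where "e = deg q - card B - 1"
  have e: "2 \<le> e" "e \<le> s" "deg q = card B + 1 + e"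
    using deg_q unfolding e_def s_def by linarith+
  have "2 \<le> card (nbrs q \<inter> A)"
    using B_vertex_degree_le[OF q(1)] deg_q by simp
  then have "deg a - (card B + 1) \<notin> {e}" if "a \<in> A" for a
    using A_degree_ne_if_two_nbrs[OF q(1) _ that] e by auto
  from top_B_degree_sum_bound[OF large q this]
  have "2 * n\<^sup>2 \<le> deg x + (card B + 1) * deg x + card {a\<in>A. deg a = card B + 2}
      + \<Sum>({2..s} - {e}) + card B * deg q + 2"
    unfolding s_def by simp
  moreover have "card {a\<in>A. deg a = card B + 2} \<le> 2"
    using card_equal_degree_nbrs_le_2 card_V card_B by simp
  moreover have "e \<le> \<Sum>{2..s}"
    using member_le_sum[of e "{2..s}" id] e by simp
  then have "\<Sum>({2..s} - {e}) + e = \<Sum>{2..s}"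
    using e by (simp add: sum_diff1_nat)
  moreover have "card B * deg q = card B * (card B + 1 + e)"
    using e(3) by simp
  ultimately have "2 * n\<^sup>2 + e
      \<le> deg x + (card B + 1) * deg x + \<Sum>{2..s} + 4 + card B * (card B + 1 + e)"
    by linarith
  moreover have "deg x + (card B + 1) * deg x + \<Sum>{2..s} + 4 + card B * (card B + 1 + e) < 2 * n\<^sup>2 + e"
  proof (rule arith_top_degree_in_B_gt)
    show "deg x = card B + s + 2" "1 \<le> card B"
      using card_B_if_large_max_degree[OF large] unfolding s_def by linarith+
    show "2 * \<Sum>{2..s} + 2 = s * (s + 1)"
      using double_sum_from_2 e by simp
  qed (use card_B e in linarith)+
  ultimately show False
    by linarith
qed

lemma top_B_degree_ne_2_if_n_3:
  assumes n: "n = 3" and deg_x: "deg x = 4" and q: "q \<in> B" "\<And>b. b \<in> B \<Longrightarrow> deg b \<le> deg q"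
  shows "deg q \<noteq> 2"
proof
  assume deg_q: "deg q = 2"
  have "card B = 1"
    using card_B n deg_x by simp
  then have "2 \<le> card (nbrs q \<inter> A)"
    using B_vertex_degree_le[OF q(1)] deg_q by simp
  then have "deg a \<le> 1 + (if deg a = 3 then 2 else 0)" if "a \<in> A" for a
    using A_degree_ne_if_two_nbrs[OF q(1) _ that] nbr_degree_lt[OF _ that] card_V deg_x n deg_q
    by fastforce
  then have "(\<Sum>a\<in>A. deg a) \<le> (\<Sum>a\<in>A. 1 + (if deg a = 3 then 2 else 0))"
    by (rule sum_mono)
  also have "\<dots> = (\<Sum>a\<in>A. 1) + (\<Sum>a\<in>A. if deg a = 3 then 2 else 0)"
    by (rule sum.distrib)
  also have "\<dots> = card A + 2 * card {a\<in>A. deg a = 3}"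
    using sum.inter_filter[OF finite_nbrs[of x], of "\<lambda>_. 2::nat" "\<lambda>a. deg a = 3"] by simp
  also have "\<dots> \<le> 8"
    using card_A deg_x card_equal_degree_nbrs_le_2[of 3] card_V n by simp
  finally have "(\<Sum>a\<in>A. deg a) \<le> 8" .
  moreover have "(\<Sum>b\<in>B. deg b) \<le> 2"
    using sum_bounded_above[of B deg 2] q(2) deg_q \<open>card B = 1\<close> by simp
  ultimately show False
    using sum_degree_ge sum_degree_split deg_x n by simp
qed

lemma top_B_degree_gt:
  assumes large: "n < deg x" and q: "q \<in> B" "\<And>b. b \<in> B \<Longrightarrow> deg b \<le> deg q"
  shows "card B + 1 < deg q"
proof (rule ccontr)
  assume "\<not> ?thesis"
  then have deg_q: "deg q \<le> card B + 1"
    by simp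
  define s where "s = deg x - card B - 2"
  have shape: "deg x = card B + s + 2" "1 \<le> card B" "1 \<le> s"
    using card_B_if_large_max_degree[OF large] unfolding s_def by linarith+
  have "card {a\<in>A. deg a = card B + 2} \<le> 2"
    using card_equal_degree_nbrs_le_2 card_V card_B by simp
  with top_B_degree_sum_bound[OF large q, of "{}"]
  have bound: "2 * n\<^sup>2 \<le> deg x + (card B + 1) * deg x + \<Sum>{2..s} + 4 + card B * deg q"
    unfolding s_def by simp
  show False
  proof (cases "card B = 1 \<and> s = 1")
    case False
    have "deg x + (card B + 1) * deg x + \<Sum>{2..s} + 4 + card B * deg q < 2 * n\<^sup>2"
    proof (rule arith_top_degree_in_B_le)
      show "2 * \<Sum>{2..s} + 2 = s * (s + 1)"
        using double_sum_from_2 shape by simp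
    qed (use shape card_B deg_q False in linarith)+
    with bound show False
      by linarith
  next
    case True
    \<comment> \<open>the counting bound is attained here, so the structure has to be examined\<close>
    then have deg_x: "deg x = 4" and n: "n = 3"
      using shape card_B by linarith+
    then have "deg q = 2"
      using bound deg_q True by (simp add: power2_eq_square)
    with top_B_degree_ne_2_if_n_3[OF n deg_x q] show False
      by blast
  qed
qed

lemma max_degree_le_n:
  assumes B_deg: "\<forall>b\<in>B. deg b \<noteq> deg x"
  shows "deg x \<le> n"
proof (rule ccontr)
  assume "\<not> ?thesis"
  then have large: "n < deg x"
    by simp
  then have "B \<noteq> {}"
    using card_B_if_large_max_degree by auto
  then obtain q where q: "q \<in> B" "\<And>b. b \<in> B \<Longrightarrow> deg b \<le> deg q"
    using obtain_max_degree[OF finite_B] by blast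
  have "deg q < deg x"
    using q(1) B_deg degree_le_max B_subset by fastforce
  then show False
    using top_B_degree_gt[OF large q] top_B_degree_ne_mid[OF large q] top_B_degree_lt[OF large q]
    by linarith
qed

end

theorem theorem1p5:
  fixes n :: nat and V :: "'a set" and E :: "'a set set"
  assumes "n \<ge> 3"
    and "simple_graph V E"
    and "card V = 2 * n"
    and "card E \<ge> n^2 - 1"
    and "\<forall>a\<in>V. \<forall>b\<in>V. a \<noteq> b \<and> degree E a = degree E b \<longrightarrow> \<not> path3 E a b"
  shows "graph_iso V E (Kbip_verts (n - 1) (n + 1)) (Kbip_edges (n - 1) (n + 1))"
proof -
  interpret extremal_graph V E n
    using assms by unfold_locales auto
  have "V \<noteq> {}"
    using assms(1,3) by auto
  then obtain x where "x \<in> V" "\<And>v. v \<in> V \<Longrightarrow> degree E v \<le> degree E x"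
    using obtain_max_degree[OF finite_vertices] by blast
  then interpret extremal_max V E n x
    by unfold_locales auto
  show ?thesis
  proof (cases "\<forall>a\<in>A. \<forall>a'\<in>A. {a, a'} \<notin> E")
    case True
    then have "deg x = n + 1"
      using independent_nbrs_max_degree_le[OF True] independent_nbrs_max_degree_ne_n[OF True]
        max_degree_ge by linarith
    with True show ?thesis
      by (rule independent_nbrs_iso)
  next
    case False
    then obtain a a' where edge: "a \<in> A" "a' \<in> A" "{a, a'} \<in> E"
      by blast
    then have B_deg: "\<forall>b\<in>B. deg b \<noteq> deg x"
      using B_degree_ne_max_if_nbrs_edge by blast
    then have "deg x \<le> n"
      by (rule max_degree_le_n)
    moreover have "deg x \<noteq> n"
      using max_degree_ne_n_if_nbrs_edge[OF B_deg edge] .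
    ultimately show ?thesis
      using max_degree_ge by simp
  qed
qed

end
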